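(* There is a constant $a>0$ such that for all $0<r\le\sqrt2$ and all $x\in[0,1]^2$ with $\|x-c\|\ge r/2$, where $c=(\tfrac12,\tfrac12)$, we have $$\mathrm{area}\big(W(x,c;r)\cap[0,1]^2\cap B(c,\|x-c\|)\big)\ge a\,r^5.$$
   Context: $B(z,\rho)$ denotes the closed Euclidean ball in $\mathbb{R}^2$. For $x,y\in\mathbb{R}^2$ and $r>0$, $W(x,y;r):=\{z\in\mathbb{R}^2: B(z,r)\supseteq B(x,r)\cap B(y,\|x-y\|)\}$. *)

theory Defs
  imports "HOL-Analysis.Analysis"
begin

text \<open>Points of the plane are modelled as real^2; B(z,rho) is the closed ball cball z rho.\<close>

definition W :: "real^2 \<Rightarrow> real^2 \<Rightarrow> real \<Rightarrow> (real^2) set" where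
  "W x y r = {z. cball z r \<supseteq> cball x r \<inter> cball y (norm (x - y))}"

definition unit_square :: "(real^2) set" where
  "unit_square = cbox 0 1"

definition centre :: "real^2" where
  "centre = vector [1/2, 1/2]"

end

theory Submission
  imports Defs
begin

(* Fix x in the unit square with d = |x - c| >= r/2 and put D = c - x,
   E = D rotated by a right angle.  For mu in [m, 2m] and nu in [0, b], where
   m = r^2/(8 d^2) and b = r^3/(48 d^3), the point z = x + mu D + nu E
     (1) lies in W(x, c; r): every p in B(x,r) /\ B(c,d) satisfies |p - z| <= r,
         by expanding |p - z|^2 and using |p - x| <= r, |p - c| <= d;
     (2) lies in B(c, d), since |c - z|^2 = ((1 - mu)^2 + nu^2) d^2;
     (3) lies in the unit square, since z is within mu/2 of (1 - mu) x + mu c.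
   These points fill a parallelogram of area m * b * d^2 = r^5 / (384 d^3), and
   d <= 1 on the unit square, so a = 1/384 works. *)

text \<open>The scalar core of fact (1): with \<open>q = |w|\<^sup>2\<close>, \<open>a = w \<bullet> D\<close>, \<open>e = w \<bullet> E\<close> for
  \<open>w = p - x\<close>, the squared distance from \<open>p\<close> to \<open>x + \<mu> D + \<nu> E\<close> is at most \<open>r\<^sup>2\<close>.\<close>
lemma shifted_ball_inequality:
  fixes q a e d r \<mu> \<nu> :: real
  assumes d: "0 < d" and r: "0 \<le> r" "r \<le> 2 * d"
    and q: "q \<le> r\<^sup>2" "q \<le> 2 * a" and e: "\<bar>e\<bar> \<le> r * d"
    and \<mu>: "0 \<le> \<mu>" "\<mu> * d\<^sup>2 \<le> r\<^sup>2 / 4"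
    and \<nu>: "0 \<le> \<nu>" "6 * \<nu> * d \<le> \<mu> * r"
  shows "q - 2 * \<mu> * a - 2 * \<nu> * e + (\<mu>\<^sup>2 + \<nu>\<^sup>2) * d\<^sup>2 \<le> r\<^sup>2"
proof -
  have "r\<^sup>2 \<le> (2 * d)\<^sup>2" using r by (intro power_mono) auto
  then have "\<mu> * d\<^sup>2 \<le> 1 * d\<^sup>2" using \<mu> by (simp add: power_mult_distrib)
  then have \<mu>_le_1: "\<mu> \<le> 1" using d by (simp add: mult_le_cancel_right)
  have "\<mu> * q \<le> \<mu> * (2 * a)" using q \<mu> by (intro mult_left_mono) auto
  moreover have "(1 - \<mu>) * q \<le> (1 - \<mu>) * r\<^sup>2" using q \<mu>_le_1 by (intro mult_left_mono) auto
  ultimately have radial: "q - 2 * \<mu> * a \<le> r\<^sup>2 - \<mu> * r\<^sup>2" by (simp add: algebra_simps)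
  have "\<nu> * (- e) \<le> \<nu> * (r * d)" using e \<nu> by (intro mult_left_mono) auto
  then have lateral: "- 2 * \<nu> * e \<le> 2 * (\<nu> * r * d)" by (simp add: algebra_simps)
  have "\<mu> * (\<mu> * d\<^sup>2) \<le> \<mu> * (r\<^sup>2 / 4)" using \<mu> by (intro mult_left_mono) auto
  then have \<mu>_square: "\<mu>\<^sup>2 * d\<^sup>2 \<le> \<mu> * r\<^sup>2 / 4" by (simp add: power2_eq_square algebra_simps)
  have "\<nu> * d \<le> r" using \<nu> \<mu>_le_1 r mult_right_mono[OF \<mu>_le_1 r(1)] by linarith
  then have "\<nu> * (\<nu> * d) * d \<le> \<nu> * r * d" using \<nu> d
    by (intro mult_right_mono mult_left_mono) auto
  then have \<nu>_square: "\<nu>\<^sup>2 * d\<^sup>2 \<le> \<nu> * r * d" by (simp add: power2_eq_square algebra_simps)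
  have "6 * \<nu> * d * r \<le> \<mu> * r * r" using \<nu> r by (intro mult_right_mono) auto
  then have "3 * (\<nu> * r * d) \<le> \<mu> * r\<^sup>2 / 2" by (simp add: power2_eq_square algebra_simps)
  moreover have "0 \<le> \<mu> * r\<^sup>2" using \<mu> by simp
  ultimately show ?thesis using radial lateral \<mu>_square \<nu>_square by (simp add: algebra_simps)
qed

lemma norm_diff_orthogonal_pair_sq:
  fixes w D E :: "'a::real_inner"
  assumes DD: "D \<bullet> D = d\<^sup>2" and EE: "E \<bullet> E = d\<^sup>2" and DE: "D \<bullet> E = 0"
  shows "(norm (w - \<mu> *\<^sub>R D - \<nu> *\<^sub>R E))\<^sup>2
    = w \<bullet> w - 2 * \<mu> * (w \<bullet> D) - 2 * \<nu> * (w \<bullet> E) + (\<mu>\<^sup>2 + \<nu>\<^sup>2) * d\<^sup>2"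
proof -
  have ED: "E \<bullet> D = 0" using DE by (simp add: inner_commute)
  show ?thesis
    unfolding power2_norm_eq_inner
    by (simp add: inner_diff_left inner_diff_right DD EE DE ED inner_commute[of D w]
        inner_commute[of E w] power2_eq_square algebra_simps)
qed

lemma shifted_ball_covers:
  fixes x p D E :: "'a::real_inner"
  assumes DE: "norm D = d" "norm E = d" "D \<bullet> E = 0"
    and d: "0 < d" and r: "0 \<le> r" "r \<le> 2 * d"
    and \<mu>: "0 \<le> \<mu>" "\<mu> * d\<^sup>2 \<le> r\<^sup>2 / 4"
    and \<nu>: "0 \<le> \<nu>" "6 * \<nu> * d \<le> \<mu> * r"
    and p: "dist p x \<le> r" "dist p (x + D) \<le> d"
  shows "dist p (x + \<mu> *\<^sub>R D + \<nu> *\<^sub>R E) \<le> r"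
proof -
  define w where "w = p - x"
  have DD: "D \<bullet> D = d\<^sup>2" and EE: "E \<bullet> E = d\<^sup>2"
    using DE by (simp_all add: power2_norm_eq_inner[symmetric])
  have w: "norm w \<le> r" using p(1) by (simp add: w_def dist_norm)
  have wD: "norm (w - D) \<le> d" using p(2) by (simp add: w_def dist_norm algebra_simps)
  have ww: "w \<bullet> w \<le> r\<^sup>2" using w by (metis norm_ge_zero power2_norm_eq_inner power_mono)
  have "(w - D) \<bullet> (w - D) \<le> d\<^sup>2" using wD by (metis norm_ge_zero power2_norm_eq_inner power_mono)
  then have wwD: "w \<bullet> w \<le> 2 * (w \<bullet> D)"
    using DD by (simp add: inner_diff_left inner_diff_right inner_commute)
  have "\<bar>w \<bullet> E\<bar> \<le> norm w * norm E" by (rule Cauchy_Schwarz_ineq2)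
  also have "\<dots> \<le> r * d" using w DE(2) d by (simp add: mult_right_mono)
  finally have wE: "\<bar>w \<bullet> E\<bar> \<le> r * d" .
  have "p - (x + \<mu> *\<^sub>R D + \<nu> *\<^sub>R E) = w - \<mu> *\<^sub>R D - \<nu> *\<^sub>R E" by (simp add: w_def algebra_simps)
  then have "(dist p (x + \<mu> *\<^sub>R D + \<nu> *\<^sub>R E))\<^sup>2
      = w \<bullet> w - 2 * \<mu> * (w \<bullet> D) - 2 * \<nu> * (w \<bullet> E) + (\<mu>\<^sup>2 + \<nu>\<^sup>2) * d\<^sup>2"
    unfolding dist_norm by (simp only: norm_diff_orthogonal_pair_sq[OF DD EE DE(3)])
  also have "\<dots> \<le> r\<^sup>2" by (rule shifted_ball_inequality[OF d r ww wwD wE \<mu> \<nu>])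
  finally show ?thesis using r(1) by (rule power2_le_imp_le)
qed

lemma shifted_point_near_target:
  fixes x D E :: "'a::real_inner"
  assumes DE: "norm D = d" "norm E = d" "D \<bullet> E = 0"
    and \<mu>: "0 \<le> \<mu>" "\<mu> \<le> 1" and \<nu>: "0 \<le> \<nu>" "3 * \<nu> \<le> \<mu>"
  shows "dist (x + D) (x + \<mu> *\<^sub>R D + \<nu> *\<^sub>R E) \<le> d"
proof -
  have DD: "D \<bullet> D = d\<^sup>2" and EE: "E \<bullet> E = d\<^sup>2"
    using DE by (simp_all add: power2_norm_eq_inner[symmetric])
  have "x + D - (x + \<mu> *\<^sub>R D + \<nu> *\<^sub>R E) = D - \<mu> *\<^sub>R D - \<nu> *\<^sub>R E" by (simp add: algebra_simps)
  then have dist_eq: "(dist (x + D) (x + \<mu> *\<^sub>R D + \<nu> *\<^sub>R E))\<^sup>2 = ((1 - \<mu>)\<^sup>2 + \<nu>\<^sup>2) * d\<^sup>2"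
    unfolding dist_norm by (simp only: norm_diff_orthogonal_pair_sq[OF DD EE DE(3)] DD DE(3))
      (simp add: power2_eq_square algebra_simps)
  have "\<nu>\<^sup>2 \<le> (\<mu> / 3)\<^sup>2" using \<nu> by (intro power_mono) auto
  moreover have "\<mu> * \<mu> \<le> \<mu>" using \<mu> by (simp add: mult_left_le)
  ultimately have "(1 - \<mu>)\<^sup>2 + \<nu>\<^sup>2 \<le> 1"
    using \<mu> by (simp add: power2_eq_square algebra_simps)
  then have "(dist (x + D) (x + \<mu> *\<^sub>R D + \<nu> *\<^sub>R E))\<^sup>2 \<le> d\<^sup>2"
    unfolding dist_eq using mult_right_mono[of _ 1 "d\<^sup>2"] by simp
  moreover have "0 \<le> d" using DE(1) by auto
  ultimately show ?thesis by (rule power2_le_imp_le)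
qed

lemma centre_nth [simp]: "centre $ i = 1/2"
  using exhaust_2[of i] by (auto simp: centre_def)

lemma unit_square_iff: "x \<in> unit_square \<longleftrightarrow> (\<forall>i. 0 \<le> x $ i \<and> x $ i \<le> 1)"
  by (simp add: unit_square_def mem_box_cart)

text \<open>Fact (3): the square contains the ball of radius \<open>\<mu>/2\<close> around \<open>(1 - \<mu>) x + \<mu> c\<close>,
  being the convex combination of the point \<open>x\<close> and the ball \<open>B(c, 1/2)\<close>.\<close>
lemma shrunk_ball_in_unit_square:
  assumes x: "x \<in> unit_square" and \<mu>: "0 \<le> \<mu>" "\<mu> \<le> 1" and v: "norm v \<le> \<mu> / 2"
  shows "x + \<mu> *\<^sub>R (centre - x) + v \<in> unit_square"
  unfolding unit_square_iff
proof
  fix i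
  have "0 \<le> x $ i" "x $ i \<le> 1" using x by (auto simp: unit_square_iff)
  then have "0 \<le> (1 - \<mu>) * x $ i" "(1 - \<mu>) * x $ i \<le> 1 - \<mu>" using \<mu> by (simp_all add: mult_left_le)
  moreover have "\<bar>v $ i\<bar> \<le> \<mu> / 2" using component_le_norm_cart[of v i] v by linarith
  then have "- (\<mu> / 2) \<le> v $ i" "v $ i \<le> \<mu> / 2" by (simp_all add: abs_le_iff)
  moreover have "(x + \<mu> *\<^sub>R (centre - x) + v) $ i = (1 - \<mu>) * x $ i + \<mu> / 2 + v $ i"
    by (simp add: algebra_simps)
  ultimately show "0 \<le> (x + \<mu> *\<^sub>R (centre - x) + v) $ i \<and> (x + \<mu> *\<^sub>R (centre - x) + v) $ i \<le> 1"
    by (intro conjI) linarith+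
qed

text \<open>Points of the square are within distance 1 of its centre (via the \<open>\<ell>\<^sup>1\<close> norm).\<close>
lemma norm_minus_centre_le_1:
  assumes "x \<in> unit_square"
  shows "norm (x - centre) \<le> 1"
proof -
  have half: "\<bar>(x - centre) $ i\<bar> \<le> 1/2" for i
  proof -
    have "0 \<le> x $ i" "x $ i \<le> 1" using assms by (auto simp: unit_square_iff)
    then show ?thesis by (simp split: abs_split)
  qed
  then have "(\<Sum>i\<in>UNIV. \<bar>(x - centre) $ i\<bar>) \<le> 1"
    unfolding sum_2 using half[of 1] half[of 2] by linarith
  then show ?thesis using norm_le_l1_cart[of "x - centre"] by linarith
qed

text \<open>\<open>W(x, y; r)\<close> is the intersection of the closed balls \<open>B(p, r)\<close>, \<open>p \<in> B(x,r) \<inter> B(y,|x-y|)\<close>.\<close>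
lemma W_closed: "closed (W x y r)"
proof -
  have "W x y r = (\<Inter>p\<in>cball x r \<inter> cball y (norm (x - y)). cball p r)"
    unfolding W_def by (auto simp: dist_commute)
  then show ?thesis by (simp add: closed_INT)
qed

lemma region_lmeasurable: "W x y r \<inter> unit_square \<inter> cball z \<rho> \<in> lmeasurable"
  unfolding unit_square_def
  by (intro lmeasurable_compact compact_Int_closed closed_Int_compact W_closed compact_cbox
      closed_cball)

definition perp :: "real^2 \<Rightarrow> real^2" where
  "perp v = vector [- (v $ 2), v $ 1]"

lemma perp_orthogonal: "v \<bullet> perp v = 0"
  by (simp add: perp_def inner_vec_def sum_2)

lemma norm_perp: "norm (perp v) = norm v"
  by (simp add: perp_def norm_eq_sqrt_inner inner_vec_def sum_2 algebra_simps)

lemma cross_perp: "v $ 1 * perp v $ 2 - v $ 2 * perp v $ 1 = (norm v)\<^sup>2"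
  unfolding power2_norm_eq_inner by (simp add: perp_def inner_vec_def sum_2)

definition parallelogram :: "real^2 \<Rightarrow> real^2 \<Rightarrow> real^2 \<Rightarrow> (real^2) set" where
  "parallelogram p u v = (\<lambda>y. p + y $ 1 *\<^sub>R u + y $ 2 *\<^sub>R v) ` cbox 0 (1::real^2)"

lemma parallelogram_as_image:
  "parallelogram p u v = (\<lambda>z. p + z) ` (\<lambda>y. y $ 1 *\<^sub>R u + y $ 2 *\<^sub>R v) ` cbox 0 (1::real^2)"
  unfolding parallelogram_def image_image by (simp add: add.assoc)

lemma measure_unit_cbox: "measure lebesgue (cbox (0::real^2) 1) = 1"
proof -
  have "(0::real^2) \<in> cbox 0 1" by (simp add: mem_box_cart)
  then have "cbox (0::real^2) 1 \<noteq> {}" by blast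
  then have "measure lborel (cbox (0::real^2) 1) = 1" by (subst content_cbox_cart) (auto simp: UNIV_2)
  then show ?thesis by (subst measure_completion) auto
qed

lemma measure_parallelogram:
  "parallelogram p u v \<in> lmeasurable"
  "measure lebesgue (parallelogram p u v) = \<bar>u $ 1 * v $ 2 - u $ 2 * v $ 1\<bar>"
proof -
  define f where "f = (\<lambda>y::real^2. y $ 1 *\<^sub>R u + y $ 2 *\<^sub>R v)"
  have f: "linear f" unfolding f_def by (auto intro!: linearI simp: algebra_simps)
  have "det (matrix f) = u $ 1 * v $ 2 - u $ 2 * v $ 1"
    by (simp add: f_def det_2 matrix_def axis_def)
  then have "measure lebesgue (f ` cbox 0 1) = \<bar>u $ 1 * v $ 2 - u $ 2 * v $ 1\<bar>"
    using measure_linear_image[OF f lmeasurable_cbox] measure_unit_cbox by simp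
  then show "measure lebesgue (parallelogram p u v) = \<bar>u $ 1 * v $ 2 - u $ 2 * v $ 1\<bar>"
    unfolding parallelogram_as_image f_def[symmetric] measure_translation .
  show "parallelogram p u v \<in> lmeasurable"
    unfolding parallelogram_as_image f_def[symmetric]
    by (intro measurable_translation measurable_linear_image f lmeasurable_cbox)
qed

lemma admissible_shift_parameters:
  fixes d r \<mu> \<nu> :: real
  assumes d: "0 < d" and r: "0 < r" "r \<le> 2 * d"
    and \<mu>: "r\<^sup>2 / (8 * d\<^sup>2) \<le> \<mu>" "\<mu> \<le> r\<^sup>2 / (4 * d\<^sup>2)"
    and \<nu>: "0 \<le> \<nu>" "\<nu> \<le> r ^ 3 / (48 * d ^ 3)"
  shows "\<mu> * d\<^sup>2 \<le> r\<^sup>2 / 4" and "6 * \<nu> * d \<le> \<mu> * r" and "\<mu> \<le> 1" and "3 * \<nu> \<le> \<mu>"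
proof -
  show \<mu>d: "\<mu> * d\<^sup>2 \<le> r\<^sup>2 / 4" using \<mu>(2) d by (simp add: field_simps)
  have "6 * \<nu> * d \<le> 6 * (r ^ 3 / (48 * d ^ 3)) * d" using \<nu> d by (intro mult_right_mono) auto
  also have "\<dots> = r\<^sup>2 / (8 * d\<^sup>2) * r" using d by (simp add: field_simps power2_eq_square power3_eq_cube)
  also have "\<dots> \<le> \<mu> * r" using \<mu>(1) r by (intro mult_right_mono) auto
  finally show \<nu>r: "6 * \<nu> * d \<le> \<mu> * r" .
  have "r\<^sup>2 \<le> (2 * d)\<^sup>2" using r by (intro power_mono) auto
  then have "\<mu> * d\<^sup>2 \<le> 1 * d\<^sup>2" using \<mu>d by (simp add: power_mult_distrib)
  then show \<mu>1: "\<mu> \<le> 1" using d by (simp add: mult_le_cancel_right)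
  have "0 \<le> r\<^sup>2 / (8 * d\<^sup>2)" by simp
  then have "0 \<le> \<mu>" using \<mu>(1) by linarith
  then have "\<mu> * r \<le> \<mu> * (2 * d)" using r by (intro mult_left_mono) auto
  then have "(3 * \<nu>) * d \<le> \<mu> * d" using \<nu>r by linarith
  then show "3 * \<nu> \<le> \<mu>" using d by simp
qed

lemma parallelogram_in_region:
  fixes x :: "real^2" and r :: real
  defines "D \<equiv> centre - x" and "d \<equiv> norm (x - centre)"
  defines "m \<equiv> r\<^sup>2 / (8 * d\<^sup>2)" and "b \<equiv> r ^ 3 / (48 * d ^ 3)"
  assumes x: "x \<in> unit_square" and r: "0 < r" "r \<le> 2" "r \<le> 2 * d"
  shows "parallelogram (x + m *\<^sub>R D) (m *\<^sub>R D) (b *\<^sub>R perp D)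
    \<subseteq> W x centre r \<inter> unit_square \<inter> cball centre d"
proof
  fix z assume "z \<in> parallelogram (x + m *\<^sub>R D) (m *\<^sub>R D) (b *\<^sub>R perp D)"
  then obtain y :: "real^2" where y: "\<forall>i. 0 \<le> y $ i \<and> y $ i \<le> 1"
    and z_y: "z = x + m *\<^sub>R D + y $ 1 *\<^sub>R (m *\<^sub>R D) + y $ 2 *\<^sub>R (b *\<^sub>R perp D)"
    unfolding parallelogram_def by (auto simp: mem_box_cart)
  define \<mu> \<nu> where "\<mu> = m * (1 + y $ 1)" and "\<nu> = b * y $ 2"
  have z: "z = x + \<mu> *\<^sub>R D + \<nu> *\<^sub>R perp D" by (simp add: z_y \<mu>_def \<nu>_def algebra_simps)
  have target: "x + D = centre" by (simp add: D_def)
  have d: "0 < d" using r by linarith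
  have nD: "norm D = d" and nE: "norm (perp D) = d"
    by (simp_all add: D_def d_def norm_perp norm_minus_commute)
  have m0: "0 \<le> m" and b0: "0 \<le> b" using d r(1) by (simp_all add: m_def b_def)
  have "m * 1 \<le> m * (1 + y $ 1)" using y m0 by (intro mult_left_mono) auto
  moreover have "m * (1 + y $ 1) \<le> m * 2" using y m0 by (intro mult_left_mono) auto
  ultimately have "m \<le> \<mu>" "\<mu> \<le> 2 * m" by (simp_all add: \<mu>_def)
  then have \<mu>: "r\<^sup>2 / (8 * d\<^sup>2) \<le> \<mu>" "\<mu> \<le> r\<^sup>2 / (4 * d\<^sup>2)" "0 \<le> \<mu>" using m0 by (auto simp: m_def)
  have "\<nu> \<le> b * 1" unfolding \<nu>_def using y b0 by (intro mult_left_mono) auto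
  moreover have "0 \<le> \<nu>" unfolding \<nu>_def using y b0 by simp
  ultimately have \<nu>: "0 \<le> \<nu>" "\<nu> \<le> r ^ 3 / (48 * d ^ 3)" by (simp_all add: b_def)
  note par = admissible_shift_parameters[OF d r(1) r(3) \<mu>(1,2) \<nu>]
  have "\<mu> * r \<le> \<mu> * 2" using r(2) \<mu>(3) by (rule mult_left_mono)
  moreover have "norm (\<nu> *\<^sub>R perp D) = \<nu> * d" using \<nu>(1) nE by simp
  ultimately have sideways: "norm (\<nu> *\<^sub>R perp D) \<le> \<mu> / 2" using par(2) \<mu>(3) by linarith
  have "z \<in> W x centre r" unfolding W_def
  proof (safe)
    fix p assume "p \<in> cball x r" "p \<in> cball centre (norm (x - centre))"
    then have "dist p x \<le> r" "dist p (x + D) \<le> d" by (simp_all add: target d_def dist_commute)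
    then have "dist p z \<le> r" unfolding z
      by (rule shifted_ball_covers[OF nD nE perp_orthogonal d less_imp_le[OF r(1)] r(3) \<mu>(3) par(1) \<nu>(1) par(2)])
    then show "p \<in> cball z r" by (simp add: dist_commute)
  qed
  moreover have "z \<in> unit_square"
    using shrunk_ball_in_unit_square[OF x \<mu>(3) par(3) sideways] by (simp add: z D_def)
  moreover have "z \<in> cball centre d"
    using shifted_point_near_target[OF nD nE perp_orthogonal \<mu>(3) par(3) \<nu>(1) par(4), of x]
    unfolding z target by simp
  ultimately show "z \<in> W x centre r \<inter> unit_square \<inter> cball centre d" by blast
qed

lemma measure_shift_parallelogram:
  fixes x :: "real^2" and r :: real
  defines "D \<equiv> centre - x" and "d \<equiv> norm (x - centre)"
  defines "m \<equiv> r\<^sup>2 / (8 * d\<^sup>2)" and "b \<equiv> r ^ 3 / (48 * d ^ 3)"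
  assumes r: "0 < r" and d: "0 < d"
  shows "measure lebesgue (parallelogram (x + m *\<^sub>R D) (m *\<^sub>R D) (b *\<^sub>R perp D)) = r ^ 5 / (384 * d ^ 3)"
proof -
  have "(m *\<^sub>R D) $ 1 * (b *\<^sub>R perp D) $ 2 - (m *\<^sub>R D) $ 2 * (b *\<^sub>R perp D) $ 1
      = m * b * (D $ 1 * perp D $ 2 - D $ 2 * perp D $ 1)" by (simp add: algebra_simps)
  also have "\<dots> = m * b * d\<^sup>2"
    unfolding D_def d_def by (simp only: cross_perp norm_minus_commute)
  also have "\<dots> = r ^ 5 / (384 * d ^ 3)"
    using d by (simp add: m_def b_def field_simps power2_eq_square power3_eq_cube numeral_eq_Suc)
  finally show ?thesis using r d by (simp add: measure_parallelogram)
qed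

lemma region_area_lower_bound:
  assumes x: "x \<in> unit_square" and r: "0 < r" "r \<le> 2" "r \<le> 2 * norm (x - centre)"
  shows "r ^ 5 / (384 * norm (x - centre) ^ 3)
    \<le> measure lebesgue (W x centre r \<inter> unit_square \<inter> cball centre (norm (x - centre)))"
proof -
  have d: "0 < norm (x - centre)" using r by linarith
  show ?thesis
    using measure_mono_fmeasurable[OF parallelogram_in_region[OF x r]
        fmeasurableD[OF measure_parallelogram(1)] region_lmeasurable]
    by (simp only: measure_shift_parallelogram[OF r(1) d])
qed

theorem mainTheorem12:
  shows "\<exists>a>0. \<forall>r x. 0 < r \<and> r \<le> sqrt 2 \<and> x \<in> unit_square \<and> norm (x - centre) \<ge> r / 2
     \<longrightarrow> measure lebesgue (W x centre r \<inter> unit_square \<inter> cball centre (norm (x - centre))) \<ge> a * r ^ 5"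
proof (intro exI[of _ "1/384"] conjI allI impI)
  fix r :: real and x :: "real^2"
  assume "0 < r \<and> r \<le> sqrt 2 \<and> x \<in> unit_square \<and> norm (x - centre) \<ge> r / 2"
  then have x: "x \<in> unit_square" and r: "0 < r" "r \<le> 2" "r \<le> 2 * norm (x - centre)"
    using sqrt2_less_2 by auto
  have "norm (x - centre) ^ 3 \<le> 1" using norm_minus_centre_le_1[OF x] by (simp add: power_le_one)
  moreover have "0 < norm (x - centre)" using r by linarith
  ultimately have "1/384 * r ^ 5 \<le> r ^ 5 / (384 * norm (x - centre) ^ 3)"
    using r by (simp add: field_simps mult_left_le)
  also have "\<dots> \<le> measure lebesgue (W x centre r \<inter> unit_square \<inter> cball centre (norm (x - centre)))"
    by (rule region_area_lower_bound[OF x r])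
  finally show "1/384 * r ^ 5 \<le> measure lebesgue (W x centre r \<inter> unit_square \<inter> cball centre (norm (x - centre)))" .
qed simp

end
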